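(* Let $G$ be a graph on $n$ vertices with at least one edge. Then \[ \lambda(G)\le \frac{-|E(G)|}{\binom{\chi(G)}{2}\,\theta(G)}. \]
   Context: All graphs are finite and simple; $\lambda(G)$ denotes the smallest eigenvalue of the adjacency matrix of $G$. $\chi(G)$ is the chromatic number and $\alpha(G)$ the independence number of $G$. For a graph $G$ on $n$ vertices, $\theta(G)=\min\{n/2,\ \alpha(G)\}$. *)

theory Defs
  imports "HOL-Analysis.Analysis"
begin

text \<open>A finite simple graph is represented by a finite vertex type 'n (vertex set UNIV,
  n = CARD('n)) and a symmetric irreflexive adjacency relation E.\<close>

definition simple_graph :: "('n::finite \<Rightarrow> 'n \<Rightarrow> bool) \<Rightarrow> bool" where
  "simple_graph E \<longleftrightarrow> (\<forall>u v. E u v \<longrightarrow> E v u) \<and> (\<forall>u. \<not> E u u)"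

definition edges :: "('n::finite \<Rightarrow> 'n \<Rightarrow> bool) \<Rightarrow> 'n set set" where
  "edges E = {{u, v} | u v. E u v}"

definition adj_matrix :: "('n::finite \<Rightarrow> 'n \<Rightarrow> bool) \<Rightarrow> real^'n^'n" where
  "adj_matrix E = (\<chi> i j. if E i j then 1 else 0)"

definition eigenvalues :: "real^'n^'n \<Rightarrow> real set" where
  "eigenvalues A = {l. \<exists>v. v \<noteq> 0 \<and> A *v v = l *\<^sub>R v}"

definition min_eigenvalue :: "real^'n^'n \<Rightarrow> real" where
  "min_eigenvalue A = Min (eigenvalues A)"

definition proper_colouring :: "('n::finite \<Rightarrow> 'n \<Rightarrow> bool) \<Rightarrow> nat \<Rightarrow> ('n \<Rightarrow> nat) \<Rightarrow> bool" where
  "proper_colouring E k c \<longleftrightarrow> (\<forall>u. c u < k) \<and> (\<forall>u v. E u v \<longrightarrow> c u \<noteq> c v)"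

definition chromatic_number :: "('n::finite \<Rightarrow> 'n \<Rightarrow> bool) \<Rightarrow> nat" where
  "chromatic_number E = (LEAST k. \<exists>c. proper_colouring E k c)"

definition independent_set :: "('n::finite \<Rightarrow> 'n \<Rightarrow> bool) \<Rightarrow> 'n set \<Rightarrow> bool" where
  "independent_set E S \<longleftrightarrow> (\<forall>u\<in>S. \<forall>v\<in>S. \<not> E u v)"

definition independence_number :: "('n::finite \<Rightarrow> 'n \<Rightarrow> bool) \<Rightarrow> nat" where
  "independence_number E = Max (card ` {S. independent_set E S})"

definition theta :: "('n::finite \<Rightarrow> 'n \<Rightarrow> bool) \<Rightarrow> real" where
  "theta E = min (real CARD('n) / 2) (real (independence_number E))"

end

theory Submission
  imports Defs
begin

text \<open>Colour \<open>G\<close> properly with \<open>\<chi>(G)\<close> colours. Some pair of colour classes \<open>V\<^sub>i, V\<^sub>j\<close>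
  carries at least \<open>|E(G)| / (\<chi>(G) choose 2)\<close> edges. The vector that is \<open>1\<close> on \<open>V\<^sub>i\<close>
  and \<open>-1\<close> on \<open>V\<^sub>j\<close> has quadratic form \<open>-2 e(V\<^sub>i, V\<^sub>j)\<close>, since colour classes are
  independent, and squared norm \<open>|V\<^sub>i| + |V\<^sub>j| \<le> 2 \<theta>(G)\<close>. The Rayleigh quotient bound
  \<open>\<lambda>(A) \<le> x\<^sup>T A x / x\<^sup>T x\<close> for symmetric \<open>A\<close> then gives the claim.\<close>

lemma inner_matrix_vector_symmetric:
  fixes A :: "real^'n^'n"
  assumes "transpose A = A"
  shows "x \<bullet> (A *v y) = y \<bullet> (A *v x)"
  by (metis assms dot_lmul_matrix inner_commute transpose_matrix_vector)

lemma finite_eigenvalues_symmetric: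
  fixes A :: "real^'n^'n"
  assumes sym: "transpose A = A"
  shows "finite (eigenvalues A)"
proof -
  define f where "f l = (SOME v. v \<noteq> 0 \<and> A *v v = l *\<^sub>R v)" for l
  have f: "f l \<noteq> 0 \<and> A *v f l = l *\<^sub>R f l" if "l \<in> eigenvalues A" for l
    using that unfolding f_def eigenvalues_def by (metis (mono_tags, lifting) mem_Collect_eq someI_ex)
  have orth: "f l \<bullet> f l' = 0" if "l \<in> eigenvalues A" "l' \<in> eigenvalues A" "l \<noteq> l'" for l l'
  proof -
    have "l' * (f l \<bullet> f l') = l * (f l \<bullet> f l')"
      using inner_matrix_vector_symmetric[OF sym, of "f l" "f l'"] f[OF that(1)] f[OF that(2)]
      by (simp add: inner_commute)
    thus ?thesis using that(3) by simp
  qed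
  have "independent (f ` eigenvalues A)"
    by (rule pairwise_orthogonal_independent) (use f orth in \<open>auto simp: pairwise_def orthogonal_def\<close>)
  moreover have "inj_on f (eigenvalues A)"
    by (metis f inj_onI inner_eq_zero_iff orth)
  ultimately show ?thesis
    using independent_imp_finite finite_imageD by blast
qed

lemma quadratic_form_minimiser_eigenvector:
  fixes A :: "real^'n^'n"
  assumes sym: "transpose A = A"
    and lower: "\<And>y. \<mu> * (y \<bullet> y) \<le> y \<bullet> (A *v y)"
    and attained: "v \<bullet> (A *v v) = \<mu> * (v \<bullet> v)"
  shows "A *v v = \<mu> *\<^sub>R v"
proof (rule ccontr)
  define w where "w = A *v v - \<mu> *\<^sub>R v"
  define c where "c = w \<bullet> (A *v w) - \<mu> * (w \<bullet> w)"
  assume "A *v v \<noteq> \<mu> *\<^sub>R v"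
  hence ww: "w \<bullet> w > 0" by (simp add: w_def)
  have c0: "c \<ge> 0" using lower[of w] by (simp add: c_def)
  \<comment> \<open>The excess of the form over \<open>\<mu>\<close> along \<open>v + t w\<close> is \<open>2 t (w \<bullet> w) + t\<^sup>2 c\<close>, negative for small \<open>t < 0\<close>.\<close>
  have excess: "(v + t *\<^sub>R w) \<bullet> (A *v (v + t *\<^sub>R w)) - \<mu> * ((v + t *\<^sub>R w) \<bullet> (v + t *\<^sub>R w))
      = 2 * t * (w \<bullet> w) + t\<^sup>2 * c" for t
  proof -
    have "w \<bullet> (A *v v) - \<mu> * (w \<bullet> v) = w \<bullet> w" by (simp add: w_def inner_diff_right)
    thus ?thesis
      using inner_matrix_vector_symmetric[OF sym, of v w] attained
      by (simp add: c_def algebra_simps inner_add_left inner_add_right power2_eq_square inner_commute)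
  qed
  define t where "t = - (w \<bullet> w) / (c + 1)"
  define r where "r = (w \<bullet> w)\<^sup>2 / (c + 1)"
  have r0: "r > 0" using c0 ww by (simp add: r_def)
  have "t\<^sup>2 * c = r * (c / (c + 1))"
    by (simp add: t_def r_def power2_eq_square)
  also have "\<dots> < r"
  proof -
    have "c / (c + 1) < 1" using c0 by simp
    thus ?thesis using r0 by (metis mult.right_neutral mult_strict_left_mono)
  qed
  finally have "2 * t * (w \<bullet> w) + t\<^sup>2 * c < 0"
    using r0 by (simp add: t_def r_def power2_eq_square)
  thus False using excess[of t] lower[of "v + t *\<^sub>R w"] by linarith
qed

lemma min_eigenvalue_le_rayleigh_quotient:
  fixes A :: "real^'n^'n"
  assumes sym: "transpose A = A" and "x \<noteq> 0"
  shows "min_eigenvalue A \<le> x \<bullet> (A *v x) / (x \<bullet> x)"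
proof -
  have "continuous_on (sphere 0 1) (\<lambda>y::real^'n. y \<bullet> (A *v y))"
    by (intro continuous_intros linear_continuous_on matrix_vector_mul_linear)
  moreover have "sphere (0::real^'n) 1 \<noteq> {}" by (metis empty_iff mem_sphere_0 norm_axis_1)
  ultimately obtain v where v: "v \<in> sphere 0 1"
    and vmin: "\<And>y. y \<in> sphere 0 1 \<Longrightarrow> v \<bullet> (A *v v) \<le> y \<bullet> (A *v y)"
    using continuous_attains_inf[OF compact_sphere] by blast
  define \<mu> where "\<mu> = v \<bullet> (A *v v)"
  have vv: "v \<bullet> v = 1" using v by (simp add: norm_eq_1)
  have lower: "\<mu> * (y \<bullet> y) \<le> y \<bullet> (A *v y)" for y
  proof (cases "y = 0")
    case False
    define z where "z = (1 / norm y) *\<^sub>R y"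
    have "\<mu> \<le> z \<bullet> (A *v z)" using vmin[of z] False by (simp add: z_def \<mu>_def)
    also have "\<dots> = y \<bullet> (A *v y) / (norm y)\<^sup>2"
      by (simp add: z_def matrix_vector_mult_scaleR power2_eq_square)
    finally show ?thesis using False by (simp add: field_simps power2_norm_eq_inner)
  qed simp
  have "A *v v = \<mu> *\<^sub>R v"
    by (rule quadratic_form_minimiser_eigenvector[OF sym lower]) (simp add: \<mu>_def vv)
  hence "\<mu> \<in> eigenvalues A" using v unfolding eigenvalues_def by (auto intro!: exI[of _ v])
  hence "min_eigenvalue A \<le> \<mu>" unfolding min_eigenvalue_def using finite_eigenvalues_symmetric[OF sym] by simp
  also have "\<mu> \<le> x \<bullet> (A *v x) / (x \<bullet> x)" using lower[of x] \<open>x \<noteq> 0\<close> by (simp add: field_simps)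
  finally show ?thesis .
qed

lemma exists_ge_average:
  fixes f :: "'a \<Rightarrow> real"
  assumes "finite A" "A \<noteq> {}"
  shows "\<exists>a\<in>A. sum f A / card A \<le> f a"
proof (rule ccontr)
  assume "\<not> ?thesis"
  hence "sum f A < (\<Sum>a\<in>A. sum f A / card A)"
    using assms by (intro sum_strict_mono) auto
  thus False using assms by simp
qed

lemma card_ordered_pairs_less: "card {(i, j). i < j \<and> j < (k::nat)} = k choose 2"
proof (induction k)
  case (Suc k)
  have split: "{(i, j). i < j \<and> j < Suc k} = {(i, j). i < j \<and> j < k} \<union> (\<lambda>i. (i, k)) ` {..<k}"
    by auto
  have "finite {(i, j). i < j \<and> j < (k::nat)}"
    by (rule finite_subset[of _ "{..<k} \<times> {..<k}"]) auto
  hence "card {(i, j). i < j \<and> j < Suc k} = card {(i, j). i < j \<and> j < k} + card ((\<lambda>i. (i, k)) ` {..<k})"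
    unfolding split by (intro card_Un_disjoint) auto
  also have "card ((\<lambda>i. (i, k)) ` {..<k}) = k" by (subst card_image) (auto simp: inj_on_def)
  finally show ?case using Suc by (simp add: numeral_2_eq_2)
qed simp

lemma simple_graph_adj_matrix_symmetric:
  "simple_graph E \<Longrightarrow> transpose (adj_matrix E) = adj_matrix E"
  unfolding simple_graph_def adj_matrix_def transpose_def by (auto simp: vec_eq_iff)

lemma inner_adj_matrix:
  "x \<bullet> (adj_matrix E *v y) = (\<Sum>(u, v)\<in>{(u, v). E u v}. x $ u * y $ v)"
proof -
  have "x \<bullet> (adj_matrix E *v y) = (\<Sum>u\<in>UNIV. \<Sum>v\<in>UNIV. if E u v then x $ u * y $ v else 0)"
    by (auto simp: inner_vec_def matrix_vector_mult_def adj_matrix_def sum_distrib_left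
        intro!: sum.cong)
  also have "\<dots> = (\<Sum>(u, v)\<in>UNIV. if E u v then x $ u * y $ v else 0)"
    by (simp add: sum.cartesian_product UNIV_Times_UNIV[symmetric] del: UNIV_Times_UNIV)
  also have "\<dots> = (\<Sum>(u, v)\<in>{(u, v). E u v}. x $ u * y $ v)"
    by (rule sum.mono_neutral_cong_right) (auto split: if_splits)
  finally show ?thesis .
qed

definition colour_edges :: "('n::finite \<Rightarrow> 'n \<Rightarrow> bool) \<Rightarrow> ('n \<Rightarrow> nat) \<Rightarrow> nat \<Rightarrow> nat \<Rightarrow> ('n \<times> 'n) set" where
  "colour_edges E c i j = {(u, v). E u v \<and> c u = i \<and> c v = j}"

definition colour_pair_vector :: "('n::finite \<Rightarrow> nat) \<Rightarrow> nat \<Rightarrow> nat \<Rightarrow> real^'n" where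
  "colour_pair_vector c i j = (\<chi> u. if c u = i then 1 else if c u = j then -1 else 0)"

lemma card_colour_edges_swap:
  assumes "simple_graph E"
  shows "card (colour_edges E c j i) = card (colour_edges E c i j)"
proof -
  have "colour_edges E c j i = prod.swap ` colour_edges E c i j"
    using assms unfolding simple_graph_def colour_edges_def by (auto simp: image_iff)
  thus ?thesis by (simp add: card_image)
qed

lemma quadratic_form_colour_pair_vector:
  assumes "simple_graph E" "proper_colouring E k c" "i \<noteq> j"
  defines "x \<equiv> colour_pair_vector c i j"
  shows "x \<bullet> (adj_matrix E *v x) = - 2 * real (card (colour_edges E c i j))"
proof -
  \<comment> \<open>No edge joins two vertices of one class, so \<open>x\<^sub>u x\<^sub>v = -1\<close> exactly on the edges between the classes.\<close>
  have "x \<bullet> (adj_matrix E *v x)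
      = (\<Sum>q\<in>{(u, v). E u v}. if q \<in> colour_edges E c i j \<union> colour_edges E c j i then -1 else 0)"
    unfolding inner_adj_matrix
    by (rule sum.cong) (use assms in \<open>auto simp: x_def colour_pair_vector_def colour_edges_def proper_colouring_def
        split: if_splits\<close>)
  also have "\<dots> = - real (card (colour_edges E c i j \<union> colour_edges E c j i))"
  proof -
    have "colour_edges E c i j \<union> colour_edges E c j i \<subseteq> {(u, v). E u v}"
      by (auto simp: colour_edges_def)
    thus ?thesis by (simp add: sum.If_cases Int_absorb1 Collect_disj_eq)
  qed
  also have "card (colour_edges E c i j \<union> colour_edges E c j i) = 2 * card (colour_edges E c i j)"
    using assms(3) card_colour_edges_swap[OF assms(1)]
    by (subst card_Un_disjoint) (auto simp: colour_edges_def)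
  finally show ?thesis by simp
qed

lemma inner_colour_pair_vector:
  assumes "i \<noteq> j"
  shows "colour_pair_vector c i j \<bullet> colour_pair_vector c i j = real (card {u. c u = i} + card {u. c u = j})"
proof -
  have "colour_pair_vector c i j \<bullet> colour_pair_vector c i j
      = (\<Sum>u\<in>UNIV. if c u = i \<or> c u = j then 1 else 0)"
    using assms by (auto simp: inner_vec_def colour_pair_vector_def intro!: sum.cong)
  also have "\<dots> = real (card ({u. c u = i} \<union> {u. c u = j}))"
    by (simp add: sum.If_cases Collect_disj_eq)
  also have "\<dots> = real (card {u. c u = i} + card {u. c u = j})"
    using assms by (subst card_Un_disjoint) auto
  finally show ?thesis .
qed

lemma proper_colouring_card_UNIV:
  fixes E :: "'n::finite \<Rightarrow> 'n \<Rightarrow> bool"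
  assumes "simple_graph E"
  obtains c where "proper_colouring E CARD('n) c"
proof -
  obtain c where c: "bij_betw c (UNIV :: 'n set) {0..<CARD('n)}"
    using ex_bij_betw_finite_nat[of "UNIV :: 'n set"] by auto
  have "c u < CARD('n)" for u
    using bij_betw_apply[OF c] by simp
  moreover have "c u \<noteq> c v" if "E u v" for u v
  proof -
    have "u \<noteq> v" using that assms unfolding simple_graph_def by auto
    thus ?thesis using bij_betw_imp_inj_on[OF c] by (simp add: inj_eq)
  qed
  ultimately show thesis using that unfolding proper_colouring_def by blast
qed

lemma proper_colouring_chromatic_number:
  assumes "simple_graph E"
  obtains c where "proper_colouring E (chromatic_number E) c"
  using proper_colouring_card_UNIV[OF assms] LeastI_ex[of "\<lambda>k. \<exists>c. proper_colouring E k c"]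
  unfolding chromatic_number_def by blast

lemma card_independent_set_le:
  "independent_set E S \<Longrightarrow> card S \<le> independence_number E"
  unfolding independence_number_def by (intro Max_ge) auto

lemma independent_set_colour_class:
  "proper_colouring E k c \<Longrightarrow> independent_set E {u. c u = i}"
  unfolding proper_colouring_def independent_set_def by blast

lemma theta_pos:
  fixes E :: "'n::finite \<Rightarrow> 'n \<Rightarrow> bool"
  assumes "simple_graph E"
  shows "theta E > 0"
proof -
  fix u :: 'n
  have "independent_set E {u}"
    using assms by (simp add: independent_set_def simple_graph_def)
  hence "independence_number E \<ge> 1"
    using card_independent_set_le by fastforce
  thus ?thesis by (simp add: theta_def)
qed

lemma card_two_colour_classes_le_theta:
  fixes E :: "'n::finite \<Rightarrow> 'n \<Rightarrow> bool"
  assumes "proper_colouring E k c" "i \<noteq> j"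
  shows "real (card {u. c u = i} + card {u. c u = j}) \<le> 2 * theta E"
proof -
  have "card {u. c u = i} + card {u. c u = j} = card ({u. c u = i} \<union> {u. c u = j})"
    using assms(2) by (subst card_Un_disjoint) auto
  also have "\<dots> \<le> CARD('n)" by (rule card_mono) auto
  finally show ?thesis
    using card_independent_set_le[OF independent_set_colour_class[OF assms(1)], of i]
      card_independent_set_le[OF independent_set_colour_class[OF assms(1)], of j]
    by (simp add: theta_def)
qed

lemma min_eigenvalue_adj_matrix_le_colour_edges:
  assumes "simple_graph E" "proper_colouring E k c" "i \<noteq> j" "c u = i"
  shows "min_eigenvalue (adj_matrix E) \<le> - real (card (colour_edges E c i j)) / theta E"
proof -
  define x where "x = colour_pair_vector c i j"
  define s where "s = real (card {u. c u = i} + card {u. c u = j})"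
  have xAx: "x \<bullet> (adj_matrix E *v x) = - 2 * real (card (colour_edges E c i j))"
    unfolding x_def by (rule quadratic_form_colour_pair_vector[OF assms(1-3)])
  have xx: "x \<bullet> x = s"
    unfolding x_def s_def by (rule inner_colour_pair_vector[OF assms(3)])
  have "x $ u \<noteq> 0" using assms(4) by (simp add: x_def colour_pair_vector_def)
  hence "x \<noteq> 0" by auto
  hence "s > 0" using xx inner_gt_zero_iff by metis
  have "min_eigenvalue (adj_matrix E) \<le> x \<bullet> (adj_matrix E *v x) / (x \<bullet> x)"
    by (rule min_eigenvalue_le_rayleigh_quotient[OF simple_graph_adj_matrix_symmetric[OF assms(1)] \<open>x \<noteq> 0\<close>])
  also have "\<dots> = - (2 * real (card (colour_edges E c i j))) / s"
    unfolding xAx xx by simp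
  also have "\<dots> \<le> - (2 * real (card (colour_edges E c i j))) / (2 * theta E)"
    using \<open>s > 0\<close> theta_pos[OF assms(1)]
    by (intro divide_left_mono_neg card_two_colour_classes_le_theta[OF assms(2,3), folded s_def]) auto
  finally show ?thesis by simp
qed

lemma card_edges_le_sum_colour_edges:
  assumes "simple_graph E" "proper_colouring E k c"
  shows "card (edges E) \<le> (\<Sum>(i, j)\<in>{(i, j). i < j \<and> j < k}. card (colour_edges E c i j))"
proof -
  define S where "S = {(u, v). E u v \<and> c u < c v}"
  have "edges E \<subseteq> (\<lambda>(u, v). {u, v}) ` S"
  proof
    fix e assume "e \<in> edges E"
    then obtain u v where e: "e = {u, v}" "E u v" unfolding edges_def by auto
    have "E v u" "c u \<noteq> c v"
      using assms e(2) unfolding simple_graph_def proper_colouring_def by auto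
    hence "(u, v) \<in> S \<or> (v, u) \<in> S"
      using e(2) unfolding S_def by auto
    thus "e \<in> (\<lambda>(u, v). {u, v}) ` S"
      unfolding e(1) by (auto simp: image_iff insert_commute)
  qed
  hence "card (edges E) \<le> card ((\<lambda>(u, v). {u, v}) ` S)" by (intro card_mono) auto
  also have "\<dots> \<le> card S" by (rule card_image_le) simp
  also have "S = (\<Union>(i, j)\<in>{(i, j). i < j \<and> j < k}. colour_edges E c i j)"
    using assms(2) by (auto simp: S_def colour_edges_def proper_colouring_def)
  also have "card \<dots> = (\<Sum>(i, j)\<in>{(i, j). i < j \<and> j < k}. card (colour_edges E c i j))"
  proof (subst card_UN_disjoint)
    show "finite {(i, j). i < j \<and> j < k}"
      by (rule finite_subset[of _ "{..<k} \<times> {..<k}"]) auto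
  qed (auto simp: colour_edges_def split_def)
  finally show ?thesis .
qed

lemma exists_colour_pair_with_many_edges:
  assumes "simple_graph E" "proper_colouring E k c" "E u0 v0"
  obtains i j u where "i \<noteq> j" "c u = i"
    "real (card (edges E)) / real (k choose 2) \<le> real (card (colour_edges E c i j))"
proof -
  define P where "P = {(i, j). i < j \<and> j < k}"
  define D where "D = (\<lambda>(i, j). real (card (colour_edges E c i j)))"
  have "finite P" unfolding P_def by (rule finite_subset[of _ "{..<k} \<times> {..<k}"]) auto
  have "c u0 \<noteq> c v0" "c u0 < k" "c v0 < k"
    using assms(2,3) unfolding proper_colouring_def by auto
  hence "(0, 1) \<in> P" unfolding P_def by auto
  hence "P \<noteq> {}" by auto
  then obtain p where "p \<in> P" and avg: "sum D P / card P \<le> D p"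
    using exists_ge_average[OF \<open>finite P\<close>] by blast
  obtain i j where p: "p = (i, j)" by fastforce
  have "card P = k choose 2" unfolding P_def by (rule card_ordered_pairs_less)
  have "real (card (edges E)) \<le> sum D P"
    using card_edges_le_sum_colour_edges[OF assms(1,2)]
    unfolding P_def D_def by (simp add: case_prod_beta flip: of_nat_sum)
  hence "real (card (edges E)) / card P \<le> D p"
    using avg by (meson divide_right_mono of_nat_0_le_iff order_trans)
  hence bound: "real (card (edges E)) / real (k choose 2) \<le> real (card (colour_edges E c i j))"
    using \<open>card P = k choose 2\<close> by (simp add: p D_def)
  have "{u0, v0} \<in> edges E" using assms(3) by (auto simp: edges_def)
  hence "card (edges E) > 0" by (auto simp: card_gt_0_iff)
  moreover have "k choose 2 > 0"
    using \<open>P \<noteq> {}\<close> \<open>finite P\<close> \<open>card P = k choose 2\<close> by (metis card_gt_0_iff)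
  ultimately have "real (card (edges E)) / real (k choose 2) > 0" by simp
  hence "colour_edges E c i j \<noteq> {}" using bound by auto
  then obtain u v where "(u, v) \<in> colour_edges E c i j" by auto
  thus thesis using that[OF _ _ bound] \<open>p \<in> P\<close> by (auto simp: p P_def colour_edges_def)
qed

theorem theorem2p8:
  fixes E :: "'n::finite \<Rightarrow> 'n \<Rightarrow> bool"
  assumes "simple_graph E"
    and "\<exists>u v. E u v"
  shows "min_eigenvalue (adj_matrix E)
           \<le> - real (card (edges E))
               / (real (chromatic_number E choose 2) * theta E)"
proof -
  obtain c where c: "proper_colouring E (chromatic_number E) c"
    using proper_colouring_chromatic_number[OF assms(1)] .
  obtain u0 v0 where "E u0 v0" using assms(2) by blast
  then obtain i j u where ij: "i \<noteq> j" "c u = i"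
    and many: "real (card (edges E)) / real (chromatic_number E choose 2) \<le> real (card (colour_edges E c i j))"
    using exists_colour_pair_with_many_edges[OF assms(1) c] by blast
  have "min_eigenvalue (adj_matrix E) \<le> - real (card (colour_edges E c i j)) / theta E"
    using min_eigenvalue_adj_matrix_le_colour_edges[OF assms(1) c ij] .
  also have "\<dots> \<le> - (real (card (edges E)) / real (chromatic_number E choose 2)) / theta E"
    using many theta_pos[OF assms(1)] by (intro divide_right_mono) auto
  finally show ?thesis by simp
qed

end
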